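(* Let $\epsilon\in(0,1)$ and let $x\in\{0,1\}^m$ and $y\in\{0,1\}^k$ be independent random variables, each with independent coordinates equal to $1$ with probability $(1-\epsilon)/2$. Then \[ \Pr[\mu_x(y)\ge0]\le\exp\bigl(-\epsilon^3(1-O(\epsilon))k/2\bigr). \]
   Context: Characteristic strings and forks. A characteristic string is $w=w_1\dots w_n\in\{0,1\}^n$; index $i$ is honest if $w_i=0$ and adversarial if $w_i=1$. A fork for $w$ is a rooted tree with edges directed away from the root $r$ and labeling $\ell:V\to\{0,\dots,n\}$ with (F1) $\ell(r)=0$; (F2) labels strictly increasing along directed paths; (F3) each honest index labels exactly one vertex; (F4) for honest $i<j$ the vertex labeled $i$ has strictly smaller depth than the vertex labeled $j$. Write $F\vdash w$. A vertex is honest if it is the root or labeled by an honest index. A tine is a directed path from the root; its length is its number of edges, $\ell(t)$ the label of its last vertex. A fork is closed if every leaf is honest; a closed fork has a unique longest tine $\hat t$. For closed $F\vdash w$ and tine $t$: $\mathrm{gap}(t)=\mathrm{length}(\hat t)-\mathrm{length}(t)$, $\mathrm{reserve}(t)=|\{i:w_i=1,\ i>\ell(t)\}|$, $\mathrm{reach}(t)=\mathrm{reserve}(t)-\mathrm{gap}(t)$. For $w=xy$, tines are disjoint over $y$ if they share no edge terminating at a vertex with label $>|x|$ (a tine may be paired with itself). $\mu_x(F)=\max\min\{\mathrm{reach}(t_1),\mathrm{reach}(t_2)\}$ over pairs disjoint over $y$, and $\mu_x(y)=\max\{\mu_x(F):F\vdash xy\text{ closed}\}$. *)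

theory Defs
  imports "HOL-Probability.Probability" "HOL-Library.Sublist"
begin

(* Characteristic strings: bool lists, True = 1 (adversarial), False = 0 (honest).
   Index i (1-based) refers to w ! (i - 1). *)

definition honest_idx :: "bool list \<Rightarrow> nat \<Rightarrow> bool" where
  "honest_idx w i \<longleftrightarrow> 1 \<le> i \<and> i \<le> length w \<and> \<not> w ! (i - 1)"

definition adv_idx :: "bool list \<Rightarrow> nat \<Rightarrow> bool" where
  "adv_idx w i \<longleftrightarrow> 1 \<le> i \<and> i \<le> length w \<and> w ! (i - 1)"

(* A rooted tree is encoded by Ulam-Harris addresses: a finite prefix-closed set V of
   nat lists; the root is [], edges go from v to v @ [j]; depth = length.
   The tine ending at v is identified with v (its path from the root). *)
definition is_fork :: "bool list \<Rightarrow> nat list set \<Rightarrow> (nat list \<Rightarrow> nat) \<Rightarrow> bool" where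
  "is_fork w V l \<longleftrightarrow>
     finite V \<and> [] \<in> V \<and> (\<forall>v\<in>V. \<forall>u. prefix u v \<longrightarrow> u \<in> V) \<and>
     (\<forall>v\<in>V. l v \<le> length w) \<and>
     l [] = 0 \<and>
     (\<forall>u\<in>V. \<forall>v\<in>V. strict_prefix u v \<longrightarrow> l u < l v) \<and>
     (\<forall>i. honest_idx w i \<longrightarrow> (\<exists>!v. v \<in> V \<and> l v = i)) \<and>
     (\<forall>u\<in>V. \<forall>v\<in>V. honest_idx w (l u) \<and> honest_idx w (l v) \<and> l u < l v
        \<longrightarrow> length u < length v)"

definition honest_vertex :: "bool list \<Rightarrow> (nat list \<Rightarrow> nat) \<Rightarrow> nat list \<Rightarrow> bool" where
  "honest_vertex w l v \<longleftrightarrow> v = [] \<or> honest_idx w (l v)"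

definition closed_fork :: "bool list \<Rightarrow> nat list set \<Rightarrow> (nat list \<Rightarrow> nat) \<Rightarrow> bool" where
  "closed_fork w V l \<longleftrightarrow> is_fork w V l \<and>
     (\<forall>v\<in>V. (\<forall>j. v @ [j] \<notin> V) \<longrightarrow> honest_vertex w l v)"

definition fork_height :: "nat list set \<Rightarrow> nat" where
  "fork_height V = Max (length ` V)"

definition gap :: "nat list set \<Rightarrow> nat list \<Rightarrow> int" where
  "gap V t = int (fork_height V) - int (length t)"

definition reserve :: "bool list \<Rightarrow> (nat list \<Rightarrow> nat) \<Rightarrow> nat list \<Rightarrow> nat" where
  "reserve w l t = card {i. adv_idx w i \<and> i > l t}"

definition reach :: "bool list \<Rightarrow> nat list set \<Rightarrow> (nat list \<Rightarrow> nat) \<Rightarrow> nat list \<Rightarrow> int" where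
  "reach w V l t = int (reserve w l t) - gap V t"

(* tines t1, t2 share no edge terminating at a vertex with label > m;
   the edge terminating at v (v \<noteq> root) lies on tine t iff v is a prefix of t *)
definition disjoint_over :: "nat \<Rightarrow> (nat list \<Rightarrow> nat) \<Rightarrow> nat list \<Rightarrow> nat list \<Rightarrow> bool" where
  "disjoint_over m l t1 t2 \<longleftrightarrow>
     (\<forall>v. v \<noteq> [] \<and> prefix v t1 \<and> prefix v t2 \<longrightarrow> l v \<le> m)"

(* mu_x(F) for w = x @ y with |x| = m *)
definition mu_fork :: "nat \<Rightarrow> bool list \<Rightarrow> nat list set \<Rightarrow> (nat list \<Rightarrow> nat) \<Rightarrow> int" where
  "mu_fork m w V l = Max {min (reach w V l t1) (reach w V l t2) | t1 t2.
      t1 \<in> V \<and> t2 \<in> V \<and> disjoint_over m l t1 t2}"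

definition margin :: "bool list \<Rightarrow> bool list \<Rightarrow> int" where
  "margin x y = Max {mu_fork (length x) (x @ y) V l | V l. closed_fork (x @ y) V l}"

definition bern_list :: "nat \<Rightarrow> real \<Rightarrow> bool list pmf" where
  "bern_list n p = map_pmf (\<lambda>f. map f [0..<n]) (Pi_pmf {..<n} False (\<lambda>_. bernoulli_pmf p))"

end

theory Submission
  imports Defs
begin

(* The margin is controlled by a two-counter recursion in the symbols of y: a 1 raises both rho
   (the largest reach) and mu (the margin) by one; a 0 lowers both by one, except that rho stays at 0
   and mu stays at 0 while rho > 0.  That the recursion bounds the margin from above comes from
   pruning a closed fork for w0 to the subtree spanned by the vertices honest for w: the vertex of
   the new honest index is the unique deepest one, and every other tine loses at least one unit of
   reach on the way down to the pruned fork.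
   For eps <= 1/20 the potential gamma^rho psi^max(0, -mu), with gamma = 1 + 9 eps^2/10 and
   psi = gamma/(1 + eps), contracts in expectation by the factor 1 - 4 eps^3/5 per symbol of y,
   while the geometric tails Pr[rho(x) >= j] <= ((1 - eps)/(1 + eps))^j give
   E[gamma^rho(x)] <= 1 + 3 eps/5.  When k eps^2 > 2 this prefactor is absorbed into the exponent;
   otherwise the last symbol alone gives the bound 1 - eps.  C = 20 makes eps > 1/20 trivial. *)

section \<open>The recursion for reach and margin\<close>

(* Truncated subtraction r - 1 is the max(r - 1, 0) of the recursion. *)
definition reach_step :: "nat \<Rightarrow> bool \<Rightarrow> nat" where
  "reach_step r b = (if b then Suc r else r - 1)"

definition reach_rec :: "bool list \<Rightarrow> nat" where
  "reach_rec w = foldl reach_step 0 w"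

fun margin_step :: "nat \<times> int \<Rightarrow> bool \<Rightarrow> nat \<times> int" where
  "margin_step (r, u) b =
     (if b then (Suc r, u + 1) else (r - 1, if 0 < r \<and> u = 0 then 0 else u - 1))"

definition margin_rec :: "bool list \<Rightarrow> bool list \<Rightarrow> int" where
  "margin_rec x y = snd (foldl margin_step (reach_rec x, int (reach_rec x)) y)"

lemma fst_foldl_margin_step: "fst (foldl margin_step s y) = foldl reach_step (fst s) y"
  by (induction y arbitrary: s) (auto simp: reach_step_def)

lemma foldl_margin_step_le:
  "snd s \<le> int (fst s) \<Longrightarrow> snd (foldl margin_step s y) \<le> int (fst (foldl margin_step s y))"
  by (induction y arbitrary: s) auto

lemma reach_rec_snoc: "reach_rec (w @ [b]) = reach_step (reach_rec w) b"
  by (simp add: reach_rec_def)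

lemma margin_rec_Nil: "margin_rec x [] = int (reach_rec x)"
  by (simp add: margin_rec_def)

lemma margin_rec_snoc:
  "margin_rec x (y @ [b]) = snd (margin_step (reach_rec (x @ y), margin_rec x y) b)"
proof -
  have "fst (foldl margin_step (reach_rec x, int (reach_rec x)) y) = reach_rec (x @ y)"
    by (simp add: fst_foldl_margin_step reach_rec_def)
  then show ?thesis
    unfolding margin_rec_def by (metis foldl_Cons foldl_Nil foldl_append prod.collapse)
qed

lemma reach_rec_append: "reach_rec (x @ y) = foldl reach_step (reach_rec x) y"
  by (simp add: reach_rec_def)

lemma foldl_reach_step_le: "foldl reach_step r w \<le> r + length w"
proof (induction w arbitrary: r)
  case (Cons b w)
  have "reach_step r b \<le> Suc r" by (auto simp: reach_step_def)
  then show ?case using Cons.IH[of "reach_step r b"] by simp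
qed simp

lemma margin_rec_le_reach_rec: "margin_rec x y \<le> int (reach_rec (x @ y))"
  using foldl_margin_step_le[of "(reach_rec x, int (reach_rec x))" y]
  by (simp add: margin_rec_def fst_foldl_margin_step reach_rec_append)

lemma margin_rec_snoc_False_nonneg: "0 \<le> margin_rec x (y @ [False]) \<Longrightarrow> 1 \<le> reach_rec (x @ y)"
  using margin_rec_le_reach_rec[of x y] by (auto simp: margin_rec_snoc split: if_splits)

lemma strict_prefix_take: "i < j \<Longrightarrow> j \<le> length t \<Longrightarrow> strict_prefix (take i t) (take j t)"
proof -
  assume ij: "i < j" "j \<le> length t"
  then have "prefix (take i t) (take j t)"
    by (metis less_imp_le min.absorb1 take_is_prefix take_take)
  moreover have "length (take i t) \<noteq> length (take j t)" using ij by simp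
  ultimately show ?thesis by (auto simp: strict_prefix_def dest: arg_cong[of _ _ length])
qed

lemma reserve_le_length: "reserve w l t \<le> length w"
proof -
  have "{i. adv_idx w i \<and> l t < i} \<subseteq> {1..length w}" by (auto simp: adv_idx_def)
  then show ?thesis
    unfolding reserve_def by (metis card_atLeastAtMost card_mono diff_Suc_1 finite_atLeastAtMost)
qed

context
  fixes w :: "bool list" and V :: "nat list set" and l :: "nat list \<Rightarrow> nat"
  assumes fork: "is_fork w V l"
begin

lemma fork_finite: "finite V"
  and fork_root: "[] \<in> V"
  and fork_root_label: "l [] = 0"
  using fork unfolding is_fork_def by blast+

lemma fork_prefix_closed: "v \<in> V \<Longrightarrow> prefix u v \<Longrightarrow> u \<in> V"
  using fork unfolding is_fork_def by blast

lemma fork_label_le: "v \<in> V \<Longrightarrow> l v \<le> length w"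
  using fork unfolding is_fork_def by blast

lemma fork_label_mono: "u \<in> V \<Longrightarrow> v \<in> V \<Longrightarrow> strict_prefix u v \<Longrightarrow> l u < l v"
  using fork unfolding is_fork_def by blast

lemma fork_honest_unique: "honest_idx w i \<Longrightarrow> \<exists>!v. v \<in> V \<and> l v = i"
  using fork unfolding is_fork_def by blast

lemma fork_honest_depth:
  "u \<in> V \<Longrightarrow> v \<in> V \<Longrightarrow> honest_idx w (l u) \<Longrightarrow> honest_idx w (l v) \<Longrightarrow> l u < l v
   \<Longrightarrow> length u < length v"
  using fork unfolding is_fork_def by blast

lemma fork_label_pos: "v \<in> V \<Longrightarrow> v \<noteq> [] \<Longrightarrow> 0 < l v"
  using fork_label_mono[of "[]" v] fork_root fork_root_label by (simp add: strict_prefix_def)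

lemma fork_label_snoc_less: "v @ [j] \<in> V \<Longrightarrow> l v < l (v @ [j])"
  using fork_label_mono fork_prefix_closed by (simp add: strict_prefix_def)

lemma fork_label_take_less:
  "t \<in> V \<Longrightarrow> i < j \<Longrightarrow> j \<le> length t \<Longrightarrow> l (take i t) < l (take j t)"
  by (intro fork_label_mono fork_prefix_closed[OF _ take_is_prefix] strict_prefix_take)

lemma fork_length_le_label: "v \<in> V \<Longrightarrow> length v \<le> l v"
proof (induction v rule: rev_induct)
  case (snoc j v)
  then have "v \<in> V" using fork_prefix_closed by simp
  then show ?case using snoc fork_label_snoc_less[of v j] by simp
qed simp

lemma fork_height_ge: "v \<in> V \<Longrightarrow> length v \<le> fork_height V"
  unfolding fork_height_def by (intro Max_ge) (auto simp: fork_finite)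

lemma fork_height_attained: "\<exists>v\<in>V. length v = fork_height V"
proof -
  have "fork_height V \<in> length ` V"
    unfolding fork_height_def using fork_finite fork_root by (intro Max_in) auto
  then show ?thesis by auto
qed

lemma fork_height_le: "fork_height V \<le> length w"
proof -
  obtain v where "v \<in> V" "length v = fork_height V" using fork_height_attained by blast
  then show ?thesis using fork_length_le_label[of v] fork_label_le[of v] by simp
qed

lemma fork_leaf_prefix:
  assumes leaf: "\<And>j. z @ [j] \<notin> V" and u: "u \<in> V" "prefix z u"
  shows "u = z"
proof (rule ccontr)
  assume "u \<noteq> z"
  then have "strict_prefix z u" using u(2) by simp
  then obtain a r where "u = z @ a # r" by (rule strict_prefixE')
  then have "prefix (z @ [a]) u" by simp
  then show False using fork_prefix_closed[OF u(1)] leaf by blast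
qed

lemma reach_abs_le: "t \<in> V \<Longrightarrow> \<bar>reach w V l t\<bar> \<le> int (length w)"
  using fork_height_ge[of t] fork_height_le reserve_le_length[of w l t]
  unfolding reach_def gap_def by linarith

lemma reserve_take_add_le:
  assumes t: "t \<in> V" and ij: "i \<le> j" "j \<le> length t"
    and adv: "\<And>k. i < k \<Longrightarrow> k \<le> j \<Longrightarrow> adv_idx w (l (take k t))"
  shows "(j - i) + reserve w l (take j t) \<le> reserve w l (take i t)"
proof -
  let ?lab = "\<lambda>k. l (take k t)"
  let ?A = "{k. adv_idx w k \<and> ?lab i < k}"
  let ?B = "{k. adv_idx w k \<and> ?lab j < k}"
  let ?C = "?lab ` {i<..j}"
  have less: "?lab a < ?lab b" if "a < b" "b \<le> length t" for a b
    using fork_label_take_less[OF t that] .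
  have le: "?lab a \<le> ?lab b" if "a \<le> b" "b \<le> length t" for a b
    using less[of a b] that by (cases "a = b") auto
  have finA: "finite ?A" by (rule finite_subset[of _ "{..length w}"]) (auto simp: adv_idx_def)
  have CA: "?C \<subseteq> ?A" using adv less ij by auto
  have BA: "?B \<subseteq> ?A" using le[OF ij] by auto
  have CB: "?C \<inter> ?B = {}" using le ij by force
  have "inj_on ?lab {i<..j}"
    by (rule inj_onI) (metis greaterThanAtMost_iff ij(2) less less_irrefl linorder_cases order_trans)
  then have "card ?C = j - i" by (simp add: card_image)
  moreover have "card ?C + card ?B = card (?C \<union> ?B)"
    using CB CA BA finA by (intro card_Un_disjoint[symmetric]) (auto intro: finite_subset)
  moreover have "card (?C \<union> ?B) \<le> card ?A" using CA BA finA by (intro card_mono) auto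
  ultimately show ?thesis unfolding reserve_def by simp
qed

lemma finite_pair_reaches:
  "finite {min (reach w V l t1) (reach w V l t2) | t1 t2. t1 \<in> V \<and> t2 \<in> V \<and> disjoint_over m l t1 t2}"
  by (rule finite_subset[of _ "(\<lambda>(t1, t2). min (reach w V l t1) (reach w V l t2)) ` (V \<times> V)"])
     (auto simp: fork_finite)

lemma disjoint_over_root: "disjoint_over m l [] []"
  by (simp add: disjoint_over_def)

lemma mu_fork_le:
  assumes "\<And>t1 t2. t1 \<in> V \<Longrightarrow> t2 \<in> V \<Longrightarrow> disjoint_over m l t1 t2
             \<Longrightarrow> min (reach w V l t1) (reach w V l t2) \<le> a"
  shows "mu_fork m w V l \<le> a"
  unfolding mu_fork_def using assms fork_root disjoint_over_root
  by (intro Max.boundedI finite_pair_reaches) blast+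

lemma mu_fork_ge: "- int (length w) \<le> mu_fork m w V l"
proof -
  have "min (reach w V l []) (reach w V l []) \<le> mu_fork m w V l"
    unfolding mu_fork_def using fork_root disjoint_over_root
    by (intro Max_ge finite_pair_reaches) blast
  then show ?thesis using reach_abs_le[OF fork_root] by simp
qed

end

lemma honest_idx_snoc_True: "honest_idx (w @ [True]) i = honest_idx w i"
  unfolding honest_idx_def by (cases "i \<le> length w") (auto simp: nth_append)

lemma adv_idx_snoc_True: "adv_idx (w @ [True]) i = (adv_idx w i \<or> i = Suc (length w))"
  unfolding adv_idx_def by (cases "i \<le> length w") (auto simp: nth_append)

lemma honest_idx_snoc_False: "honest_idx (w @ [False]) i = (honest_idx w i \<or> i = Suc (length w))"
  unfolding honest_idx_def by (cases "i \<le> length w") (auto simp: nth_append)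

lemma adv_idx_snoc_False: "adv_idx (w @ [False]) i = adv_idx w i"
  unfolding adv_idx_def by (cases "i \<le> length w") (auto simp: nth_append)

lemma honest_idx_append: "honest_idx w i \<Longrightarrow> honest_idx (w @ u) i"
  unfolding honest_idx_def by (auto simp: nth_append)

lemma reserve_snoc_False: "reserve (w @ [False]) l t = reserve w l t"
  unfolding reserve_def adv_idx_snoc_False ..

lemma reserve_snoc_True:
  assumes "l t \<le> length w"
  shows "reserve (w @ [True]) l t = Suc (reserve w l t)"
proof -
  have "{i. adv_idx (w @ [True]) i \<and> l t < i} = insert (Suc (length w)) {i. adv_idx w i \<and> l t < i}"
    using assms by (auto simp: adv_idx_snoc_True)
  moreover have "finite {i. adv_idx w i \<and> l t < i}"
    by (rule finite_subset[of _ "{..length w}"]) (auto simp: adv_idx_def)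
  ultimately show ?thesis unfolding reserve_def by (simp add: adv_idx_def)
qed

lemma closed_fork_snoc_True:
  assumes closed: "closed_fork (w @ [True]) V l"
  shows "closed_fork w V l"
proof -
  have fork: "is_fork (w @ [True]) V l" using closed by (simp add: closed_fork_def)
  have "l v \<le> length w" if v: "v \<in> V" for v
  proof (rule ccontr)
    assume "\<not> l v \<le> length w"
    then have lv: "l v = Suc (length w)" using fork_label_le[OF fork v] by simp
    have "v @ [j] \<notin> V" for j
      using fork_label_snoc_less[OF fork, of v j] fork_label_le[OF fork, of "v @ [j]"] lv by auto
    then have "honest_vertex (w @ [True]) l v" using closed v by (simp add: closed_fork_def)
    moreover have "v \<noteq> []" using lv fork_root_label[OF fork] by auto
    ultimately show False using lv by (simp add: honest_vertex_def honest_idx_def)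
  qed
  then show ?thesis
    using closed unfolding closed_fork_def is_fork_def honest_vertex_def honest_idx_snoc_True by simp
qed

lemma reach_snoc_True:
  assumes "closed_fork (w @ [True]) V l" "t \<in> V"
  shows "reach (w @ [True]) V l t = reach w V l t + 1"
proof -
  have "is_fork w V l" using closed_fork_snoc_True[OF assms(1)] by (simp add: closed_fork_def)
  then have "l t \<le> length w" using assms(2) by (rule fork_label_le)
  then show ?thesis unfolding reach_def by (simp add: reserve_snoc_True)
qed

section \<open>Pruning a closed fork at a new honest index\<close>

definition honest_closure :: "bool list \<Rightarrow> nat list set \<Rightarrow> (nat list \<Rightarrow> nat) \<Rightarrow> nat list set" where
  "honest_closure w V l = {v \<in> V. \<exists>u\<in>V. prefix v u \<and> honest_vertex w l u}"

lemma is_fork_honest_closure: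
  assumes fork: "is_fork (w @ x) V l"
  shows "is_fork w (honest_closure w V l) l"
  unfolding is_fork_def
proof (intro conjI ballI allI impI)
  let ?C = "honest_closure w V l"
  have CV: "?C \<subseteq> V" by (auto simp: honest_closure_def)
  show "finite ?C" using fork_finite[OF fork] CV by (rule finite_subset[rotated])
  show "[] \<in> ?C" using fork_root[OF fork] by (auto simp: honest_closure_def honest_vertex_def)
  show "u \<in> ?C" if "v \<in> ?C" "prefix u v" for u v
    using that fork_prefix_closed[OF fork] unfolding honest_closure_def by (blast intro: prefix_order.trans)
  show "l v \<le> length w" if v: "v \<in> ?C" for v
  proof -
    obtain u where u: "u \<in> V" "prefix v u" "honest_vertex w l u" "v \<in> V"
      using v by (auto simp: honest_closure_def)
    have "l v \<le> l u"
      using fork_label_mono[OF fork u(4) u(1)] u(2) by (cases "v = u") (auto simp: strict_prefix_def)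
    moreover have "l u \<le> length w"
      using u(3) fork_root_label[OF fork] by (auto simp: honest_vertex_def honest_idx_def)
    ultimately show ?thesis by simp
  qed
  show "l [] = 0" by (rule fork_root_label[OF fork])
  show "l u < l v" if "u \<in> ?C" "v \<in> ?C" "strict_prefix u v" for u v
    using that CV fork_label_mono[OF fork] by blast
  show "\<exists>!v. v \<in> ?C \<and> l v = i" if i: "honest_idx w i" for i
  proof -
    obtain v where v: "v \<in> V" "l v = i" and unique: "\<And>v'. v' \<in> V \<Longrightarrow> l v' = i \<Longrightarrow> v' = v"
      using fork_honest_unique[OF fork honest_idx_append[OF i]] by blast
    have "v \<in> ?C" using v i by (auto simp: honest_closure_def honest_vertex_def)
    show ?thesis
    proof (rule ex1I[of _ v])
      show "v \<in> ?C \<and> l v = i" using \<open>v \<in> ?C\<close> v by simp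
      show "v' = v" if "v' \<in> ?C \<and> l v' = i" for v' using that CV by (intro unique) auto
    qed
  qed
  show "length u < length v"
    if "u \<in> ?C" "v \<in> ?C" "honest_idx w (l u) \<and> honest_idx w (l v) \<and> l u < l v" for u v
    using that CV fork_honest_depth[OF fork] honest_idx_append by blast
qed

lemma closed_fork_honest_closure:
  assumes fork: "is_fork (w @ x) V l"
  shows "closed_fork w (honest_closure w V l) l"
  unfolding closed_fork_def
proof (intro conjI is_fork_honest_closure[OF fork] ballI impI)
  fix v assume v: "v \<in> honest_closure w V l" and leaf: "\<forall>j. v @ [j] \<notin> honest_closure w V l"
  obtain u where u: "u \<in> V" "prefix v u" "honest_vertex w l u" using v by (auto simp: honest_closure_def)
  have "v = u"
  proof (rule ccontr)
    assume "v \<noteq> u"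
    then have "strict_prefix v u" using u(2) by simp
    then obtain a r where "u = v @ a # r" by (rule strict_prefixE')
    then have "prefix (v @ [a]) u" by simp
    then have "v @ [a] \<in> honest_closure w V l"
      using u fork_prefix_closed[OF fork] by (auto simp: honest_closure_def)
    then show False using leaf by blast
  qed
  then show "honest_vertex w l v" using u(3) by simp
qed

lemma longest_prefix_in:
  assumes "[] \<in> S"
  obtains k where "k \<le> length t" "take k t \<in> S" "\<And>j. k < j \<Longrightarrow> j \<le> length t \<Longrightarrow> take j t \<notin> S"
proof -
  obtain k where "k \<le> length t \<and> take k t \<in> S" "\<forall>j. j \<le> length t \<and> take j t \<in> S \<longrightarrow> j \<le> k"
    using Nat.ex_has_greatest_nat[of "\<lambda>k. k \<le> length t \<and> take k t \<in> S" 0 "length t"] assms by auto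
  then show ?thesis using that by (meson leD)
qed

lemma margin_step_False_bound:
  fixes r :: nat and u a b c d :: int
  assumes "min a b \<le> u" "b \<le> int r" "d < b" "c < a \<or> c = 0 \<and> 0 \<le> a"
  shows "min c d \<le> snd (margin_step (r, u) False)"
  using assms by auto

lemma disjoint_over_prefix:
  "disjoint_over m l t1 t2 \<Longrightarrow> prefix a1 t1 \<Longrightarrow> prefix a2 t2 \<Longrightarrow> disjoint_over m l a1 a2"
  unfolding disjoint_over_def by (meson prefix_order.trans)

locale honest_extension =
  fixes w :: "bool list" and V :: "nat list set" and l :: "nat list \<Rightarrow> nat" and z :: "nat list"
  assumes closed: "closed_fork (w @ [False]) V l"
    and z_in: "z \<in> V" and z_label: "l z = Suc (length w)"
begin

abbreviation core :: "nat list set" where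
  "core \<equiv> honest_closure w V l"

lemma fork: "is_fork (w @ [False]) V l"
  using closed by (simp add: closed_fork_def)

lemma core_closed: "closed_fork w core l"
  using closed_fork_honest_closure[OF fork] .

lemma core_fork: "is_fork w core l"
  using core_closed by (simp add: closed_fork_def)

lemma z_leaf: "z @ [j] \<notin> V"
  using fork_label_snoc_less[OF fork, of z j] fork_label_le[OF fork, of "z @ [j]"] z_label by auto

lemma prefix_z_eq: "t \<in> V \<Longrightarrow> prefix z t \<Longrightarrow> t = z"
  using fork_leaf_prefix[OF fork z_leaf] by blast

lemma honest_vertex_snoc_False:
  assumes "v \<in> V" "v \<noteq> z"
  shows "honest_vertex (w @ [False]) l v \<longleftrightarrow> honest_vertex w l v"
proof -
  have "l v \<noteq> Suc (length w)"
    using assms z_in z_label fork_honest_unique[OF fork, of "Suc (length w)"]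
    by (auto simp: honest_idx_def)
  then show ?thesis by (simp add: honest_vertex_def honest_idx_snoc_False)
qed

lemma honest_shorter: "u \<in> V \<Longrightarrow> honest_vertex w l u \<Longrightarrow> length u < length z"
proof (cases "u = []")
  case True
  then show ?thesis using z_label fork_root_label[OF fork] by (cases z) auto
next
  case False
  assume "u \<in> V" "honest_vertex w l u"
  then have "honest_idx w (l u)" using False by (simp add: honest_vertex_def)
  moreover have "honest_idx (w @ [False]) (l z)" using z_label by (simp add: honest_idx_snoc_False)
  ultimately show ?thesis
    using fork_honest_depth[OF fork \<open>u \<in> V\<close> z_in] honest_idx_append z_label
    by (fastforce simp: honest_idx_def)
qed

lemma z_not_in_core: "z \<notin> core"
  using honest_shorter prefix_z_eq by (auto simp: honest_closure_def)

lemma height_eq: "fork_height V = length z"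
proof (rule antisym)
  obtain v where v: "v \<in> V" "length v = fork_height V" using fork_height_attained[OF fork] by blast
  have "v @ [j] \<notin> V" for j using fork_height_ge[OF fork, of "v @ [j]"] v by auto
  then have "honest_vertex (w @ [False]) l v" using closed v(1) by (simp add: closed_fork_def)
  then have "v = z \<or> length v < length z" using honest_shorter honest_vertex_snoc_False v(1) by blast
  then show "fork_height V \<le> length z" using v(2) by auto
qed (rule fork_height_ge[OF fork z_in])

lemma core_height_less: "fork_height core < length z"
proof -
  obtain v where "v \<in> core" "length v = fork_height core" using fork_height_attained[OF core_fork] by blast
  then obtain u where "u \<in> V" "prefix v u" "honest_vertex w l u" "length v = fork_height core"
    by (auto simp: honest_closure_def)
  then show ?thesis using honest_shorter prefix_length_le by fastforce
qed

lemma adversarial_outside_core: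
  assumes "v \<in> V" "v \<notin> core" "v \<noteq> z"
  shows "adv_idx (w @ [False]) (l v)"
proof -
  have "\<not> honest_vertex w l v" using assms by (auto simp: honest_closure_def)
  then have "v \<noteq> []" "\<not> honest_idx (w @ [False]) (l v)"
    using honest_vertex_snoc_False[OF assms(1,3)] by (auto simp: honest_vertex_def)
  moreover have "0 < l v" "l v \<le> length (w @ [False])"
    using fork_label_pos[OF fork assms(1)] fork_label_le[OF fork assms(1)] \<open>v \<noteq> []\<close> by auto
  ultimately show ?thesis by (simp add: honest_idx_def adv_idx_def)
qed

lemma reach_z: "reach (w @ [False]) V l z = 0"
proof -
  have "{i. adv_idx (w @ [False]) i \<and> l z < i} = {}" using z_label by (auto simp: adv_idx_def)
  then have "reserve (w @ [False]) l z = 0" unfolding reserve_def by (metis card.empty)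
  then show ?thesis unfolding reach_def gap_def height_eq by simp
qed

lemma reach_less_core:
  assumes t: "t \<in> V" "t \<noteq> z"
  obtains a where "a \<in> core" "prefix a t" "reach (w @ [False]) V l t < reach w core l a"
proof -
  obtain k where k: "k \<le> length t" "take k t \<in> core"
    and beyond: "\<And>j. k < j \<Longrightarrow> j \<le> length t \<Longrightarrow> take j t \<notin> core"
    using longest_prefix_in[OF fork_root[OF core_fork]] by blast
  have "adv_idx (w @ [False]) (l (take j t))" if "k < j" "j \<le> length t" for j
  proof (rule adversarial_outside_core)
    show "take j t \<in> V" using fork_prefix_closed[OF fork t(1) take_is_prefix] .
    show "take j t \<notin> core" using beyond[OF that] .
    show "take j t \<noteq> z" using prefix_z_eq[OF t(1)] t(2) by (metis take_is_prefix)
  qed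
  then have "(length t - k) + reserve (w @ [False]) l t \<le> reserve (w @ [False]) l (take k t)"
    using reserve_take_add_le[OF fork t(1) k(1) order_refl] by simp
  then have "reach (w @ [False]) V l t < reach w core l (take k t)"
    using k(1) height_eq core_height_less
    unfolding reach_def gap_def reserve_snoc_False by simp
  then show ?thesis using that k(2) take_is_prefix by blast
qed

lemma reach_core_prefix_z:
  obtains a where "a \<in> core" "prefix a z" "0 \<le> reach w core l a"
proof -
  obtain k where k: "k \<le> length z" "take k z \<in> core"
    and beyond: "\<And>j. k < j \<Longrightarrow> j \<le> length z \<Longrightarrow> take j z \<notin> core"
    using longest_prefix_in[OF fork_root[OF core_fork]] by blast
  have "k < length z" using k z_not_in_core by (cases "k = length z") auto
  have "adv_idx (w @ [False]) (l (take j z))" if "k < j" "j \<le> length z - 1" for j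
  proof (rule adversarial_outside_core)
    show "take j z \<in> V" using fork_prefix_closed[OF fork z_in take_is_prefix] .
    show "take j z \<notin> core" using beyond that by simp
    have "length (take j z) < length z" using that \<open>k < length z\<close> by simp
    then show "take j z \<noteq> z" by auto
  qed
  then have "(length z - 1 - k) + reserve (w @ [False]) l (take (length z - 1) z)
      \<le> reserve (w @ [False]) l (take k z)"
    using reserve_take_add_le[OF fork z_in, of k "length z - 1"] \<open>k < length z\<close> by simp
  then have "length z - 1 - k \<le> reserve (w @ [False]) l (take k z)" by linarith
  then have "0 \<le> reach w core l (take k z)"
    using k(1) core_height_less unfolding reach_def gap_def reserve_snoc_False by simp
  then show ?thesis using that k(2) take_is_prefix by blast
qed

lemma reach_step_core:
  assumes t: "t \<in> V"
  obtains a where "a \<in> core" "prefix a t"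
    "reach (w @ [False]) V l t < reach w core l a
     \<or> t = z \<and> reach (w @ [False]) V l t = 0 \<and> 0 \<le> reach w core l a"
proof (cases "t = z")
  case True
  then show ?thesis using that reach_core_prefix_z reach_z by blast
next
  case False
  then show ?thesis using that reach_less_core[OF t] by blast
qed

lemma min_reach_le_margin_step:
  assumes IH: "\<And>a1 a2. a1 \<in> core \<Longrightarrow> a2 \<in> core \<Longrightarrow> disjoint_over m l a1 a2
                 \<Longrightarrow> min (reach w core l a1) (reach w core l a2) \<le> u"
    and core_le: "\<And>a. a \<in> core \<Longrightarrow> reach w core l a \<le> int r"
    and m: "m \<le> length w"
    and t: "t1 \<in> V" "t2 \<in> V" "disjoint_over m l t1 t2"
  shows "min (reach (w @ [False]) V l t1) (reach (w @ [False]) V l t2) \<le> snd (margin_step (r, u) False)"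
proof -
  let ?r = "reach (w @ [False]) V l" and ?r' = "reach w core l"
  obtain a1 where a1: "a1 \<in> core" "prefix a1 t1" "?r t1 < ?r' a1 \<or> t1 = z \<and> ?r t1 = 0 \<and> 0 \<le> ?r' a1"
    using reach_step_core[OF t(1)] by blast
  obtain a2 where a2: "a2 \<in> core" "prefix a2 t2" "?r t2 < ?r' a2 \<or> t2 = z \<and> ?r t2 = 0 \<and> 0 \<le> ?r' a2"
    using reach_step_core[OF t(2)] by blast
  have IH12: "min (?r' a1) (?r' a2) \<le> u"
    using IH[OF a1(1) a2(1) disjoint_over_prefix[OF t(3) a1(2) a2(2)]] .
  have "z \<noteq> []" using z_label fork_root_label[OF fork] by auto
  then have "\<not> disjoint_over m l z z" using z_label m by (auto simp: disjoint_over_def)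
  then consider "t2 \<noteq> z" | "t1 \<noteq> z" using t(3) by auto
  then show ?thesis
  proof cases
    case 1
    then show ?thesis
      using IH12 core_le a1 a2 by (intro margin_step_False_bound[where a = "?r' a1" and b = "?r' a2"]) auto
  next
    case 2
    then have "min (?r t2) (?r t1) \<le> snd (margin_step (r, u) False)"
      using IH12 core_le a1 a2
      by (intro margin_step_False_bound[where a = "?r' a2" and b = "?r' a1"]) (auto simp: min.commute)
    then show ?thesis by (simp add: min.commute)
  qed
qed

end

lemma honest_extension_exists:
  assumes "closed_fork (w @ [False]) V l"
  obtains z where "honest_extension w V l z"
proof -
  have "honest_idx (w @ [False]) (Suc (length w))" by (simp add: honest_idx_def)
  then obtain z where "z \<in> V" "l z = Suc (length w)"
    using fork_honest_unique assms by (metis closed_fork_def)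
  then show ?thesis using that assms by (simp add: honest_extension_def)
qed

lemma reach_le_reach_rec: "closed_fork w V l \<Longrightarrow> t \<in> V \<Longrightarrow> reach w V l t \<le> int (reach_rec w)"
proof (induction w arbitrary: V l t rule: rev_induct)
  case Nil
  then have "reserve [] l t = 0" "length t \<le> fork_height V"
    using fork_height_ge by (auto simp: reserve_def adv_idx_def closed_fork_def)
  then show ?case by (simp add: reach_def gap_def)
next
  case (snoc b w)
  show ?case
  proof (cases b)
    case True
    then show ?thesis
      using snoc reach_snoc_True closed_fork_snoc_True by (simp add: reach_rec_snoc reach_step_def)
  next
    case False
    then obtain z where "honest_extension w V l z"
      using honest_extension_exists[of w V l] snoc.prems(1) by auto
    then interpret honest_extension w V l z .
    obtain a where "a \<in> core" "reach (w @ [False]) V l t < reach w core l a \<or> reach (w @ [False]) V l t = 0"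
      using reach_step_core[OF snoc.prems(2)] by metis
    moreover have "reach w core l a \<le> int (reach_rec w)" using snoc.IH[OF core_closed] \<open>a \<in> core\<close> .
    ultimately show ?thesis using False by (auto simp: reach_rec_snoc reach_step_def)
  qed
qed

lemma min_reach_le_margin_rec:
  "closed_fork (x @ y) V l \<Longrightarrow> t1 \<in> V \<Longrightarrow> t2 \<in> V \<Longrightarrow> disjoint_over (length x) l t1 t2
   \<Longrightarrow> min (reach (x @ y) V l t1) (reach (x @ y) V l t2) \<le> margin_rec x y"
proof (induction y arbitrary: V l t1 t2 rule: rev_induct)
  case Nil
  then show ?case using reach_le_reach_rec[of x V l t1] by (simp add: margin_rec_Nil)
next
  case (snoc b y)
  let ?w = "x @ y"
  show ?case
  proof (cases b)
    case True
    then have closed: "closed_fork (?w @ [True]) V l" using snoc.prems(1) by simp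
    have "min (reach ?w V l t1) (reach ?w V l t2) \<le> margin_rec x y"
      using snoc.IH[OF closed_fork_snoc_True[OF closed] snoc.prems(2-4)] .
    then show ?thesis
      using reach_snoc_True[OF closed snoc.prems(2)] reach_snoc_True[OF closed snoc.prems(3)] True
      by (simp add: margin_rec_snoc)
  next
    case False
    then have "closed_fork (?w @ [False]) V l" using snoc.prems(1) by simp
    then obtain z where "honest_extension ?w V l z" by (rule honest_extension_exists)
    then interpret honest_extension ?w V l z .
    have "min (reach (?w @ [False]) V l t1) (reach (?w @ [False]) V l t2)
        \<le> snd (margin_step (reach_rec ?w, margin_rec x y) False)"
      using snoc.IH[OF core_closed] reach_le_reach_rec[OF core_closed] snoc.prems(2-4)
      by (intro min_reach_le_margin_step) auto
    then show ?thesis using False by (simp add: margin_rec_snoc)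
  qed
qed

(* The path through all honest indices is a closed fork for every w; it makes the Max in margin range
   over a nonempty set. *)
definition honest_labels :: "bool list \<Rightarrow> nat list" where
  "honest_labels w = 0 # filter (honest_idx w) [1..<Suc (length w)]"

definition chain_fork :: "bool list \<Rightarrow> nat list set" where
  "chain_fork w = (\<lambda>j. replicate j 0) ` {..<length (honest_labels w)}"

definition chain_label :: "bool list \<Rightarrow> nat list \<Rightarrow> nat" where
  "chain_label w v = honest_labels w ! length v"

lemma set_honest_labels: "set (honest_labels w) = insert 0 {i. honest_idx w i}"
  by (auto simp: honest_labels_def honest_idx_def)

lemma honest_labels_less:
  assumes "i < j" "j < length (honest_labels w)"
  shows "honest_labels w ! i < honest_labels w ! j"
proof -
  have "sorted_wrt (<) (filter (honest_idx w) [1..<Suc (length w)])"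
    by (intro sorted_wrt_filter sorted_wrt_upt)
  then have "sorted_wrt (<) (honest_labels w)" by (auto simp: honest_labels_def)
  then show ?thesis using assms by (simp add: sorted_wrt_nth_less)
qed

lemma honest_labels_honest:
  assumes "0 < j" "j < length (honest_labels w)"
  shows "honest_idx w (honest_labels w ! j)"
proof -
  have "honest_labels w ! 0 = 0" by (simp add: honest_labels_def)
  then have "honest_labels w ! j \<noteq> 0" using honest_labels_less[of 0 j w] assms by simp
  moreover have "honest_labels w ! j \<in> set (honest_labels w)" using assms(2) by simp
  ultimately show ?thesis unfolding set_honest_labels by simp
qed

lemma honest_labels_le:
  assumes "j < length (honest_labels w)"
  shows "honest_labels w ! j \<le> length w"
proof (cases "j = 0")
  case False
  then show ?thesis using honest_labels_honest[of j w] assms by (simp add: honest_idx_def)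
qed (simp add: honest_labels_def)

lemma mem_chain_fork_iff:
  "v \<in> chain_fork w \<longleftrightarrow> (\<forall>a\<in>set v. a = 0) \<and> length v < length (honest_labels w)"
  unfolding chain_fork_def by (auto intro!: image_eqI[of _ _ "length v"] replicate_length_same[symmetric])

lemma is_fork_chain_fork: "is_fork w (chain_fork w) (chain_label w)"
  unfolding is_fork_def
proof (intro conjI ballI allI impI)
  let ?V = "chain_fork w" and ?l = "chain_label w" and ?hs = "honest_labels w"
  show "finite ?V" by (simp add: chain_fork_def)
  show "[] \<in> ?V" by (simp add: mem_chain_fork_iff honest_labels_def)
  show "u \<in> ?V" if "v \<in> ?V" "prefix u v" for u v
    using that set_mono_prefix[of u v] prefix_length_le[of u v] by (auto simp: mem_chain_fork_iff)
  show "?l v \<le> length w" if "v \<in> ?V" for v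
    using that honest_labels_le by (simp add: mem_chain_fork_iff chain_label_def)
  show "?l [] = 0" by (simp add: chain_label_def honest_labels_def)
  show "?l u < ?l v" if "u \<in> ?V" "v \<in> ?V" "strict_prefix u v" for u v
    using that honest_labels_less[of "length u" "length v" w] prefix_length_less[OF that(3)]
    by (simp add: mem_chain_fork_iff chain_label_def)
  show "\<exists>!v. v \<in> ?V \<and> ?l v = i" if i: "honest_idx w i" for i
  proof -
    have "i \<in> set ?hs" using i set_honest_labels by simp
    then obtain j where j: "j < length ?hs" "?hs ! j = i" by (auto simp: in_set_conv_nth)
    show ?thesis
    proof (rule ex1I[of _ "replicate j 0"])
      show "replicate j 0 \<in> ?V \<and> ?l (replicate j 0) = i"
        using j by (simp add: mem_chain_fork_iff chain_label_def)
      show "v = replicate j 0" if v: "v \<in> ?V \<and> ?l v = i" for v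
      proof -
        have "\<not> j < length v" "\<not> length v < j"
          using v j honest_labels_less[of j "length v" w] honest_labels_less[of "length v" j w]
          by (auto simp: mem_chain_fork_iff chain_label_def)
        then have "length v = j" by simp
        then show ?thesis using v by (auto simp: mem_chain_fork_iff intro: replicate_length_same[symmetric])
      qed
    qed
  qed
  show "length u < length v"
    if "u \<in> ?V" "v \<in> ?V" "honest_idx w (?l u) \<and> honest_idx w (?l v) \<and> ?l u < ?l v" for u v
    using that honest_labels_less[of "length v" "length u" w]
    by (cases "length u" "length v" rule: linorder_cases) (auto simp: mem_chain_fork_iff chain_label_def)
qed

lemma closed_fork_chain_fork: "closed_fork w (chain_fork w) (chain_label w)"
  unfolding closed_fork_def
proof (intro conjI is_fork_chain_fork ballI impI)
  fix v assume v: "v \<in> chain_fork w" and leaf: "\<forall>j. v @ [j] \<notin> chain_fork w"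
  then have "length v = length (honest_labels w) - 1"
    using leaf[rule_format, of 0] by (auto simp: mem_chain_fork_iff)
  then show "honest_vertex w (chain_label w) v"
    using v honest_labels_honest[of "length v" w]
    by (cases "length v = 0") (auto simp: honest_vertex_def chain_label_def mem_chain_fork_iff)
qed

lemma margin_le_margin_rec: "margin x y \<le> margin_rec x y"
proof -
  let ?M = "{mu_fork (length x) (x @ y) V l | V l. closed_fork (x @ y) V l}"
  have bounds: "- int (length (x @ y)) \<le> mu_fork (length x) (x @ y) V l"
    "mu_fork (length x) (x @ y) V l \<le> margin_rec x y" if "closed_fork (x @ y) V l" for V l
    using that mu_fork_ge[of "x @ y" V l] mu_fork_le[of "x @ y" V l] min_reach_le_margin_rec
    by (auto simp: closed_fork_def)
  have "?M \<subseteq> {- int (length (x @ y)) .. margin_rec x y}" using bounds by auto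
  then have "finite ?M" by (rule finite_subset) simp
  moreover have "?M \<noteq> {}" using closed_fork_chain_fork by blast
  ultimately show ?thesis unfolding margin_def using bounds by (intro Max.boundedI) auto
qed

section \<open>Random characteristic strings\<close>

lemma bern_list_0: "bern_list 0 p = return_pmf []"
  unfolding bern_list_def by simp

lemma length_bern_list: "w \<in> set_pmf (bern_list n p) \<Longrightarrow> length w = n"
  unfolding bern_list_def by auto

lemma nn_integral_bern_list_Suc:
  assumes p: "0 \<le> p" "p \<le> 1"
  shows "(\<integral>\<^sup>+w. F w \<partial>bern_list (Suc n) p) =
         (\<integral>\<^sup>+w. ennreal p * F (w @ [True]) + ennreal (1 - p) * F (w @ [False]) \<partial>bern_list n p)"
proof -
  let ?P = "Pi_pmf {..<n} False (\<lambda>_. bernoulli_pmf p)"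
  have "bern_list (Suc n) p =
      map_pmf (\<lambda>(b, f). map f [0..<n] @ [b]) (pair_pmf (bernoulli_pmf p) ?P)"
    unfolding bern_list_def lessThan_Suc
    by (subst Pi_pmf_insert) (auto simp: map_pmf_comp case_prod_beta intro!: map_pmf_cong)
  then have "(\<integral>\<^sup>+w. F w \<partial>bern_list (Suc n) p) =
      (\<integral>\<^sup>+b. \<integral>\<^sup>+f. F (map f [0..<n] @ [b]) \<partial>?P \<partial>bernoulli_pmf p)"
    by (simp add: nn_integral_pair_pmf' case_prod_beta)
  also have "\<dots> = ennreal p * (\<integral>\<^sup>+w. F (w @ [True]) \<partial>bern_list n p)
      + ennreal (1 - p) * (\<integral>\<^sup>+w. F (w @ [False]) \<partial>bern_list n p)"
    using p by (simp add: nn_integral_bernoulli_pmf bern_list_def mult.commute)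
  also have "\<dots> = (\<integral>\<^sup>+w. ennreal p * F (w @ [True]) + ennreal (1 - p) * F (w @ [False]) \<partial>bern_list n p)"
    by (simp add: nn_integral_add nn_integral_cmult)
  finally show ?thesis .
qed

lemma nn_integral_foldl_supermartingale:
  fixes step :: "'s \<Rightarrow> bool \<Rightarrow> 's" and \<Phi> :: "'s \<Rightarrow> ennreal"
  assumes p: "0 \<le> p" "p \<le> 1"
    and inv: "\<And>s b. I s \<Longrightarrow> I (step s b)"
    and drift: "\<And>s. I s \<Longrightarrow> ennreal p * \<Phi> (step s True) + ennreal (1 - p) * \<Phi> (step s False) \<le> c * \<Phi> s"
    and s: "I s"
  shows "(\<integral>\<^sup>+y. \<Phi> (foldl step s y) \<partial>bern_list n p) \<le> c ^ n * \<Phi> s"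
proof (induction n)
  case (Suc n)
  have "I (foldl step s y)" for y using s inv by (induction y arbitrary: s) auto
  then have "(\<integral>\<^sup>+y. \<Phi> (foldl step s y) \<partial>bern_list (Suc n) p)
      \<le> (\<integral>\<^sup>+y. c * \<Phi> (foldl step s y) \<partial>bern_list n p)"
    using p drift by (simp add: nn_integral_bern_list_Suc nn_integral_mono)
  also have "\<dots> \<le> c * (c ^ n * \<Phi> s)"
    using Suc.IH by (simp add: nn_integral_cmult mult_left_mono)
  finally show ?case by (simp add: mult.assoc)
qed (simp add: bern_list_0)

lemma geometric_tail_step:
  fixes p :: real
  assumes "p < 1"
  defines "\<beta> \<equiv> p / (1 - p)"
  shows "p * \<beta> ^ i + (1 - p) * \<beta> ^ Suc (Suc i) = \<beta> ^ Suc i"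
proof -
  have "1 - p \<noteq> 0" using assms by simp
  then have "(1 - p) * \<beta> ^ 2 = p * \<beta>" "p + p * \<beta> = \<beta>"
    unfolding \<beta>_def by (simp add: power2_eq_square, simp add: field_simps)
  then have "\<beta> ^ i * (p + (1 - p) * \<beta> ^ 2) = \<beta> ^ i * \<beta>" by simp
  then show ?thesis by (simp add: algebra_simps power2_eq_square)
qed

lemma reach_tail_foldl:
  fixes p :: real and f :: "'a \<Rightarrow> nat" and D :: "'a pmf"
  assumes p: "0 \<le> p" "p < 1"
    and tail: "\<And>j. (\<integral>\<^sup>+x. of_bool (j \<le> f x) \<partial>D) \<le> ennreal ((p / (1 - p)) ^ j)"
  shows "(\<integral>\<^sup>+x. \<integral>\<^sup>+y. of_bool (j \<le> foldl reach_step (f x) y) \<partial>bern_list n p \<partial>D)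
         \<le> ennreal ((p / (1 - p)) ^ j)"
proof (induction n arbitrary: j)
  case 0
  then show ?case using tail by (simp add: bern_list_0)
next
  case (Suc n)
  define \<beta> where "\<beta> = p / (1 - p)"
  have "0 \<le> \<beta>" using p by (simp add: \<beta>_def)
  let ?P = "\<lambda>j. (\<integral>\<^sup>+x. \<integral>\<^sup>+y. of_bool (j \<le> foldl reach_step (f x) y) \<partial>bern_list n p \<partial>D)"
  show ?case
  proof (cases j)
    case (Suc i)
    have "of_bool (Suc i \<le> reach_step r True) = (of_bool (i \<le> r) :: ennreal)"
      "of_bool (Suc i \<le> reach_step r False) = (of_bool (Suc (Suc i) \<le> r) :: ennreal)" for r
      by (auto simp: reach_step_def)
    then have "(\<integral>\<^sup>+x. \<integral>\<^sup>+y. of_bool (j \<le> foldl reach_step (f x) y) \<partial>bern_list (Suc n) p \<partial>D)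
        = ennreal p * ?P i + ennreal (1 - p) * ?P (Suc (Suc i))"
      using p Suc by (simp add: nn_integral_bern_list_Suc nn_integral_add nn_integral_cmult del: of_bool_eq)
    also have "\<dots> \<le> ennreal p * ennreal (\<beta> ^ i) + ennreal (1 - p) * ennreal (\<beta> ^ Suc (Suc i))"
      unfolding \<beta>_def by (intro add_mono mult_left_mono Suc.IH) auto
    also have "\<dots> = ennreal (p * \<beta> ^ i + (1 - p) * \<beta> ^ Suc (Suc i))"
      using p \<open>0 \<le> \<beta>\<close> by (simp add: ennreal_plus ennreal_mult del: power_Suc)
    also have "\<dots> = ennreal (\<beta> ^ j)"
      using geometric_tail_step[OF p(2), of i] Suc by (simp add: \<beta>_def del: power_Suc)
    finally show ?thesis unfolding \<beta>_def .
  qed simp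
qed

lemma reach_rec_tail:
  assumes "0 \<le> p" "p < 1"
  shows "(\<integral>\<^sup>+x. of_bool (j \<le> reach_rec x) \<partial>bern_list m p) \<le> ennreal ((p / (1 - p)) ^ j)"
  using reach_tail_foldl[OF assms, where f = "\<lambda>_. 0" and D = "return_pmf ()" and j = j and n = m]
  by (simp add: reach_rec_def)

lemma reach_rec_append_tail:
  assumes "0 \<le> p" "p < 1"
  shows "(\<integral>\<^sup>+x. \<integral>\<^sup>+y. of_bool (j \<le> foldl reach_step (reach_rec x) y) \<partial>bern_list n p \<partial>bern_list m p)
         \<le> ennreal ((p / (1 - p)) ^ j)"
  using reach_tail_foldl[OF assms reach_rec_tail[OF assms]] .

lemma prob_margin_rec_nonneg_le_one_minus:
  fixes e :: real
  assumes e: "0 \<le> e" "e \<le> 1"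
  shows "(\<integral>\<^sup>+x. \<integral>\<^sup>+y. of_bool (0 \<le> margin_rec x y) \<partial>bern_list (Suc k) ((1 - e) / 2) \<partial>bern_list m ((1 - e) / 2))
         \<le> ennreal (1 - e)"
proof -
  define p where "p = (1 - e) / 2"
  have p: "0 \<le> p" "p < 1" using e by (auto simp: p_def)
  have step: "ennreal p * of_bool (0 \<le> margin_rec x (y @ [True]))
      + ennreal (1 - p) * of_bool (0 \<le> margin_rec x (y @ [False]))
      \<le> ennreal p + ennreal (1 - p) * of_bool (1 \<le> foldl reach_step (reach_rec x) y)" for x y
    using margin_rec_snoc_False_nonneg[of x y]
    by (intro add_mono mult_left_mono) (auto simp: reach_rec_append)
  have "(\<integral>\<^sup>+x. \<integral>\<^sup>+y. of_bool (0 \<le> margin_rec x y) \<partial>bern_list (Suc k) p \<partial>bern_list m p)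
      \<le> (\<integral>\<^sup>+x. \<integral>\<^sup>+y. ennreal p + ennreal (1 - p) * of_bool (1 \<le> foldl reach_step (reach_rec x) y)
           \<partial>bern_list k p \<partial>bern_list m p)"
    using p step by (simp add: nn_integral_bern_list_Suc nn_integral_mono)
  also have "\<dots> = ennreal p + ennreal (1 - p) *
      (\<integral>\<^sup>+x. \<integral>\<^sup>+y. of_bool (1 \<le> foldl reach_step (reach_rec x) y) \<partial>bern_list k p \<partial>bern_list m p)"
    by (simp add: nn_integral_add nn_integral_cmult)
  also have "\<dots> \<le> ennreal p + ennreal (1 - p) * ennreal (p / (1 - p))"
    using reach_rec_append_tail[OF p, where j = 1] by (intro add_mono mult_left_mono) auto
  also have "\<dots> = ennreal p + ennreal p"
    using p by (simp flip: ennreal_mult)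
  also have "\<dots> = ennreal (1 - e)"
    using e by (simp add: p_def flip: ennreal_plus)
  finally show ?thesis by (simp add: p_def)
qed

lemma nn_integral_power_le_tails:
  fixes g :: real and f :: "'a \<Rightarrow> nat" and D :: "'a pmf"
  assumes g: "1 \<le> g" and f: "\<And>x. x \<in> set_pmf D \<Longrightarrow> f x \<le> m"
  shows "(\<integral>\<^sup>+x. ennreal (g ^ f x) \<partial>D)
         \<le> 1 + (\<Sum>j<m. ennreal ((g - 1) * g ^ j) * (\<integral>\<^sup>+x. of_bool (Suc j \<le> f x) \<partial>D))"
proof -
  have "ennreal (g ^ f x) = 1 + (\<Sum>j<m. ennreal ((g - 1) * g ^ j) * of_bool (Suc j \<le> f x))"
    if x: "x \<in> set_pmf D" for x
  proof -
    have "(\<Sum>j<m. (g - 1) * g ^ j * of_bool (Suc j \<le> f x)) = (\<Sum>j\<in>{..<m} \<inter> {..<f x}. (g - 1) * g ^ j)"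
      by (auto simp: sum.inter_restrict Suc_le_eq intro!: sum.cong)
    also have "{..<m} \<inter> {..<f x} = {..<f x}" using f[OF x] by auto
    also have "(\<Sum>j<f x. (g - 1) * g ^ j) = g ^ f x - 1"
      by (simp add: power_diff_1_eq sum_distrib_left)
    finally have "g ^ f x = 1 + (\<Sum>j<m. (g - 1) * g ^ j * of_bool (Suc j \<le> f x))" by simp
    then show ?thesis
      using g by (simp add: ennreal_plus sum_nonneg sum_ennreal[symmetric] ennreal_mult'' del: of_bool_eq)
  qed
  then have "(\<integral>\<^sup>+x. ennreal (g ^ f x) \<partial>D)
      = (\<integral>\<^sup>+x. 1 + (\<Sum>j<m. ennreal ((g - 1) * g ^ j) * of_bool (Suc j \<le> f x)) \<partial>D)"
    by (intro nn_integral_cong_AE) (simp add: AE_measure_pmf_iff)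
  also have "\<dots> = 1 + (\<integral>\<^sup>+x. (\<Sum>j<m. ennreal ((g - 1) * g ^ j) * of_bool (Suc j \<le> f x)) \<partial>D)"
    by (subst nn_integral_add) auto
  also have "\<dots> = 1 + (\<Sum>j<m. \<integral>\<^sup>+x. ennreal ((g - 1) * g ^ j) * of_bool (Suc j \<le> f x) \<partial>D)"
    by (subst nn_integral_sum) auto
  also have "\<dots> = 1 + (\<Sum>j<m. ennreal ((g - 1) * g ^ j) * (\<integral>\<^sup>+x. of_bool (Suc j \<le> f x) \<partial>D))"
    by (intro arg_cong2[where f = "(+)"] refl sum.cong nn_integral_cmult) auto
  finally show ?thesis by simp
qed

lemma geometric_weighted_sum_le:
  fixes g b :: real
  assumes "1 \<le> g" "0 \<le> b" "g * b < 1"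
  shows "(\<Sum>j<m. (g - 1) * g ^ j * b ^ Suc j) \<le> (g - 1) * b / (1 - g * b)"
proof -
  have "(\<Sum>j<m. (g * b) ^ j) = (1 - (g * b) ^ m) / (1 - g * b)"
    using assms by (simp add: sum_gp_strict)
  also have "\<dots> \<le> 1 / (1 - g * b)"
    using assms by (intro divide_right_mono) auto
  finally have "(g - 1) * b * (\<Sum>j<m. (g * b) ^ j) \<le> (g - 1) * b * (1 / (1 - g * b))"
    using assms by (intro mult_left_mono) auto
  then show ?thesis by (simp add: sum_distrib_left power_mult_distrib algebra_simps)
qed

lemma one_minus_le_exp_cube:
  fixes e :: real
  assumes "0 \<le> e" "real k * e^2 \<le> 2"
  shows "1 - e \<le> exp (- (e^3 * real k / 2))"
proof -
  have "e^3 * real k / 2 = e * (real k * e^2) / 2" by (simp add: power2_eq_square power3_eq_cube)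
  also have "\<dots> \<le> e" using assms mult_left_mono[OF assms(2) assms(1)] by simp
  finally show ?thesis using exp_ge_add_one_self[of "- (e^3 * real k / 2)"] by linarith
qed

lemma ennreal_convex_combination_le:
  fixes p a b c d :: real
  assumes "0 \<le> p" "p \<le> 1" "0 \<le> a" "0 \<le> b" "0 \<le> c" "0 \<le> d"
    and "p * a + (1 - p) * b \<le> c * d"
  shows "ennreal p * ennreal a + ennreal (1 - p) * ennreal b \<le> ennreal c * ennreal d"
proof -
  have "ennreal p * ennreal a + ennreal (1 - p) * ennreal b = ennreal (p * a + (1 - p) * b)"
    using assms by (simp add: ennreal_plus[symmetric] ennreal_mult[symmetric] del: ennreal_plus)
  also have "\<dots> \<le> ennreal (c * d)" using assms(7) by (rule ennreal_leI)
  finally show ?thesis using assms by (simp add: ennreal_mult)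
qed

section \<open>A supermartingale for the margin recursion\<close>

(* The constants 9/10 and 4/5 are tuned so that the four drift inequalities below hold for
   eps <= 1/20. *)
definition gamma_pot :: "real \<Rightarrow> real" where
  "gamma_pot e = 1 + 9/10 * e^2"

definition psi_pot :: "real \<Rightarrow> real" where
  "psi_pot e = gamma_pot e / (1 + e)"

definition drift_factor :: "real \<Rightarrow> real" where
  "drift_factor e = 1 - 4/5 * e^3"

fun potential :: "real \<Rightarrow> nat \<times> int \<Rightarrow> real" where
  "potential e (r, u) = gamma_pot e ^ r * psi_pot e ^ nat (- u)"

lemma gamma_pot_ge_1: "1 \<le> gamma_pot e"
  by (simp add: gamma_pot_def)

lemma psi_pot_pos: "0 \<le> e \<Longrightarrow> 0 < psi_pot e"
  using gamma_pot_ge_1[of e] by (simp add: psi_pot_def)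

lemma potential_nonneg: "0 \<le> e \<Longrightarrow> 0 \<le> potential e s"
  using gamma_pot_ge_1[of e] psi_pot_pos[of e] by (cases s) simp

lemma drift_factor_nonneg: "0 \<le> e \<Longrightarrow> e \<le> 1 \<Longrightarrow> 0 \<le> drift_factor e"
  using power_le_one[of e 3] by (simp add: drift_factor_def)

lemma power3_le_mult_power2:
  fixes x c :: real
  assumes "0 \<le> x" "x \<le> c"
  shows "x ^ 3 \<le> c * x ^ 2"
proof -
  have "x ^ 3 = x * x ^ 2" by (simp add: power2_eq_square power3_eq_cube)
  then show ?thesis using mult_right_mono[OF assms(2), of "x ^ 2"] by simp
qed

context
  fixes e :: real
  assumes e: "0 < e" "e \<le> 1/20"
begin

lemma small_eps_bounds: "e * (1 - e) \<le> 1/20" "e^2 \<le> e / 20" "e^3 \<le> 1/20 * e^2"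
proof -
  have "e * (1 - e) \<le> e" using e by (simp add: mult_left_le)
  then show "e * (1 - e) \<le> 1/20" using e by linarith
  show "e^3 \<le> 1/20 * e^2" using e by (intro power3_le_mult_power2) auto
  show "e^2 \<le> e / 20" using e mult_left_mono[of e "1/20" e] by (simp add: power2_eq_square)
qed

lemma drift_ineq_pos:
  "(1 - e) / 2 * gamma_pot e ^ 2 + (1 - (1 - e) / 2) \<le> drift_factor e * gamma_pot e"
proof -
  have "e^2 \<le> 1/400" using small_eps_bounds(2) e by linarith
  then have "e^3 * (81/200 * (e * (1 - e)) + 18/25 * e^2 - 1/10) \<le> 0"
    using e small_eps_bounds(1) by (intro mult_nonneg_nonpos) auto
  moreover have "(1 - e) / 2 * gamma_pot e ^ 2 + (1 - (1 - e) / 2) - drift_factor e * gamma_pot e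
      = e^3 * (81/200 * (e * (1 - e)) + 18/25 * e^2 - 1/10)"
    by (simp add: gamma_pot_def drift_factor_def field_simps power2_eq_square power3_eq_cube)
  ultimately show ?thesis by simp
qed

lemma drift_ineq_neg: "(1 - e) / 2 * (1 + e) + (1 - (1 - e) / 2) / (1 + e) \<le> drift_factor e"
proof -
  have "(1 - e) / 2 * (1 + e) + (1 - (1 - e) / 2) / (1 + e) = 1 - e^2 / 2"
    using e by (simp add: field_simps power2_eq_square)
  then show ?thesis using small_eps_bounds(3) zero_le_power2[of e] unfolding drift_factor_def by linarith
qed

lemma drift_ineq_zero_neg: "(1 - e) / 2 * (1 + e) + (1 - (1 - e) / 2) * psi_pot e \<le> drift_factor e"
proof -
  have "(1 - e) / 2 * (1 + e) + (1 - (1 - e) / 2) * psi_pot e = 1 - e^2 / 20"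
    using e by (simp add: psi_pot_def gamma_pot_def field_simps power2_eq_square)
  then show ?thesis using small_eps_bounds(3) zero_le_power2[of e] unfolding drift_factor_def by linarith
qed

lemma drift_ineq_zero: "(1 - e) / 2 * gamma_pot e + (1 - (1 - e) / 2) * psi_pot e \<le> drift_factor e"
proof -
  have "gamma_pot e \<le> 1 + e" using small_eps_bounds(2) e unfolding gamma_pot_def by linarith
  then have "(1 - e) / 2 * gamma_pot e \<le> (1 - e) / 2 * (1 + e)" using e by (intro mult_left_mono) auto
  then show ?thesis using drift_ineq_zero_neg by linarith
qed

lemma potential_drift_nonneg:
  defines "p \<equiv> (1 - e) / 2"
  assumes u: "0 \<le> u" "u \<le> int r"
  shows "p * potential e (margin_step (r, u) True) + (1 - p) * potential e (margin_step (r, u) False)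
         \<le> drift_factor e * potential e (r, u)"
proof (cases r)
  case 0
  then show ?thesis using u drift_ineq_zero by (simp add: p_def)
next
  case (Suc r')
  let ?g = "gamma_pot e"
  have "p * potential e (margin_step (r, u) True) + (1 - p) * potential e (margin_step (r, u) False)
      = ?g ^ r' * (p * ?g^2 + (1 - p))"
    using Suc u by (simp add: algebra_simps power2_eq_square)
  also have "\<dots> \<le> ?g ^ r' * (drift_factor e * ?g)"
    using drift_ineq_pos gamma_pot_ge_1[of e] by (intro mult_left_mono) (auto simp: p_def)
  finally show ?thesis using Suc u by (simp add: algebra_simps)
qed

lemma potential_drift_neg:
  defines "p \<equiv> (1 - e) / 2"
  assumes u: "u < 0"
  shows "p * potential e (margin_step (r, u) True) + (1 - p) * potential e (margin_step (r, u) False)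
         \<le> drift_factor e * potential e (r, u)"
proof -
  let ?g = "gamma_pot e" and ?h = "psi_pot e"
  obtain n where n: "nat (- u) = Suc n" using u by (cases "nat (- u)") auto
  then have n': "nat (- (u + 1)) = n" "nat (- (u - 1)) = Suc (Suc n)" by auto
  have gh: "0 < ?h" "?g = (1 + e) * ?h"
    using e psi_pot_pos[of e] by (auto simp: psi_pot_def)
  show ?thesis
  proof (cases r)
    case 0
    have "p * potential e (margin_step (r, u) True) + (1 - p) * potential e (margin_step (r, u) False)
        = ?h ^ Suc n * (p * (1 + e) + (1 - p) * ?h)"
      using 0 u n' gh by (simp add: algebra_simps)
    also have "\<dots> \<le> ?h ^ Suc n * drift_factor e"
      using drift_ineq_zero_neg gh by (intro mult_left_mono) (auto simp: p_def)
    finally show ?thesis using 0 n by (simp add: mult.commute)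
  next
    case (Suc r')
    have "p * potential e (margin_step (r, u) True) + (1 - p) * potential e (margin_step (r, u) False)
        = (?g ^ r * ?h ^ Suc n) * (p * (1 + e) + (1 - p) / (1 + e))"
      using Suc u n' gh e by (simp add: field_simps)
    also have "\<dots> \<le> (?g ^ r * ?h ^ Suc n) * drift_factor e"
      using drift_ineq_neg gh gamma_pot_ge_1[of e] by (intro mult_left_mono) (auto simp: p_def)
    finally show ?thesis using n by (simp add: mult.commute)
  qed
qed

lemma potential_drift:
  assumes "snd s \<le> int (fst s)"
  shows "(1 - e) / 2 * potential e (margin_step s True) + (1 - (1 - e) / 2) * potential e (margin_step s False)
         \<le> drift_factor e * potential e s"
proof -
  obtain r u where s: "s = (r, u)" by fastforce
  consider "0 \<le> u" | "u < 0" by linarith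
  then show ?thesis
  proof cases
    case 1
    then show ?thesis unfolding s by (rule potential_drift_nonneg) (use assms s in simp)
  next
    case 2
    then show ?thesis unfolding s by (rule potential_drift_neg)
  qed
qed

lemma potential_supermartingale:
  assumes "snd s \<le> int (fst s)"
  shows "(\<integral>\<^sup>+y. ennreal (potential e (foldl margin_step s y)) \<partial>bern_list n ((1 - e) / 2))
         \<le> ennreal (drift_factor e ^ n * potential e s)"
proof -
  have "(\<integral>\<^sup>+y. ennreal (potential e (foldl margin_step s y)) \<partial>bern_list n ((1 - e) / 2))
      \<le> ennreal (drift_factor e) ^ n * ennreal (potential e s)"
  proof (rule nn_integral_foldl_supermartingale[where I = "\<lambda>s. snd s \<le> int (fst s)"])
    show "snd (margin_step s b) \<le> int (fst (margin_step s b))" if "snd s \<le> int (fst s)" for s b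
      using that by (cases s) auto
    show "ennreal ((1 - e) / 2) * ennreal (potential e (margin_step s True))
        + ennreal (1 - (1 - e) / 2) * ennreal (potential e (margin_step s False))
        \<le> ennreal (drift_factor e) * ennreal (potential e s)" if "snd s \<le> int (fst s)" for s
      by (rule ennreal_convex_combination_le)
        (use e potential_nonneg[of e] drift_factor_nonneg[of e] potential_drift[OF that] in auto)
  qed (use e assms in auto)
  then show ?thesis
    using e potential_nonneg[of e] drift_factor_nonneg[of e] by (simp add: ennreal_mult ennreal_power)
qed

lemma gamma_pot_tail_ratio:
  defines "b \<equiv> (1 - e) / (1 + e)"
  shows "gamma_pot e * b < 1" "(gamma_pot e - 1) * b / (1 - gamma_pot e * b) \<le> 3/5 * e"
proof -
  define D where "D = 2 * e - 9/10 * e^2 * (1 - e)"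
  have "e^2 * (1 - e) \<le> e^2" using e by (simp add: mult_left_le)
  then have D: "0 < D" using e small_eps_bounds(2) unfolding D_def by linarith
  have gb: "1 - gamma_pot e * b = D / (1 + e)" "(gamma_pot e - 1) * b = 9/10 * e^2 * (1 - e) / (1 + e)"
    using e by (simp_all add: gamma_pot_def b_def D_def field_simps power2_eq_square)
  moreover have "0 < D / (1 + e)" using D e by simp
  ultimately show "gamma_pot e * b < 1" by linarith
  have "0 \<le> 6/5 - (9/10 * (1 - e) + 27/50 * (e * (1 - e)))"
    using e small_eps_bounds(1) by (simp add: field_simps)
  then have "0 \<le> e^2 * (6/5 - (9/10 * (1 - e) + 27/50 * (e * (1 - e))))" by simp
  also have "\<dots> = 3/5 * e * D - 9/10 * e^2 * (1 - e)"
    by (simp add: D_def field_simps power2_eq_square power3_eq_cube)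
  finally have ratio: "9/10 * e^2 * (1 - e) / D \<le> 3/5 * e" using D by (simp add: divide_le_eq)
  have cancel: "(a / c) / (d / c) = a / d" if "c \<noteq> 0" for a c d :: real
    using that by (simp add: field_simps)
  have "(gamma_pot e - 1) * b / (1 - gamma_pot e * b) = 9/10 * e^2 * (1 - e) / D"
    unfolding gb by (rule cancel) (use e in simp)
  then show "(gamma_pot e - 1) * b / (1 - gamma_pot e * b) \<le> 3/5 * e" using ratio by simp
qed

lemma prefactor_bound:
  "(\<integral>\<^sup>+x. ennreal (gamma_pot e ^ reach_rec x) \<partial>bern_list m ((1 - e) / 2)) \<le> ennreal (1 + 3/5 * e)"
proof -
  define p b g where "p = (1 - e) / 2" and "b = (1 - e) / (1 + e)" and "g = gamma_pot e"
  have p: "0 \<le> p" "p < 1" and b: "0 \<le> b" "p / (1 - p) = b" and g: "1 \<le> g"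
    using e gamma_pot_ge_1[of e] by (auto simp: p_def b_def g_def field_simps)
  have "reach_rec x \<le> m" if "x \<in> set_pmf (bern_list m p)" for x
    using foldl_reach_step_le[of 0 x] length_bern_list[OF that] by (simp add: reach_rec_def)
  then have "(\<integral>\<^sup>+x. ennreal (g ^ reach_rec x) \<partial>bern_list m p)
      \<le> 1 + (\<Sum>j<m. ennreal ((g - 1) * g ^ j) * (\<integral>\<^sup>+x. of_bool (Suc j \<le> reach_rec x) \<partial>bern_list m p))"
    by (rule nn_integral_power_le_tails[OF g])
  also have "\<dots> \<le> 1 + (\<Sum>j<m. ennreal ((g - 1) * g ^ j) * ennreal (b ^ Suc j))"
    using reach_rec_tail[OF p, where j = "Suc _"] unfolding b(2)
    by (intro add_mono sum_mono mult_left_mono) auto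
  also have "\<dots> = ennreal (1 + (\<Sum>j<m. (g - 1) * g ^ j * b ^ Suc j))"
    using g b by (simp add: ennreal_plus sum_nonneg sum_ennreal[symmetric] ennreal_mult'' del: power_Suc)
  also have "\<dots> \<le> ennreal (1 + 3/5 * e)"
  proof (rule ennreal_leI)
    have "g * b < 1" "(g - 1) * b / (1 - g * b) \<le> 3/5 * e"
      using gamma_pot_tail_ratio unfolding g_def b_def by auto
    then show "1 + (\<Sum>j<m. (g - 1) * g ^ j * b ^ Suc j) \<le> 1 + 3/5 * e"
      using geometric_weighted_sum_le[OF g b(1), of m] by linarith
  qed
  finally show ?thesis by (simp add: p_def g_def)
qed

lemma prob_margin_rec_nonneg_le_drift:
  "(\<integral>\<^sup>+x. \<integral>\<^sup>+y. of_bool (0 \<le> margin_rec x y) \<partial>bern_list k ((1 - e) / 2) \<partial>bern_list m ((1 - e) / 2))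
   \<le> ennreal (drift_factor e ^ k * (1 + 3/5 * e))"
proof -
  let ?p = "(1 - e) / 2"
  let ?s = "\<lambda>x. (reach_rec x, int (reach_rec x))"
  have "of_bool (0 \<le> margin_rec x y) \<le> ennreal (potential e (foldl margin_step (?s x) y))" for x y
  proof (cases "0 \<le> margin_rec x y")
    case True
    obtain r u where "foldl margin_step (?s x) y = (r, u)" by fastforce
    with True have "1 \<le> potential e (foldl margin_step (?s x) y)"
      using gamma_pot_ge_1[of e] by (simp add: margin_rec_def one_le_power)
    then show ?thesis using True by simp
  qed simp
  then have "(\<integral>\<^sup>+x. \<integral>\<^sup>+y. of_bool (0 \<le> margin_rec x y) \<partial>bern_list k ?p \<partial>bern_list m ?p)
      \<le> (\<integral>\<^sup>+x. \<integral>\<^sup>+y. ennreal (potential e (foldl margin_step (?s x) y)) \<partial>bern_list k ?p \<partial>bern_list m ?p)"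
    by (intro nn_integral_mono)
  also have "\<dots> \<le> (\<integral>\<^sup>+x. ennreal (drift_factor e ^ k * potential e (?s x)) \<partial>bern_list m ?p)"
    by (intro nn_integral_mono potential_supermartingale) simp
  also have "\<dots> = (\<integral>\<^sup>+x. ennreal (drift_factor e ^ k) * ennreal (gamma_pot e ^ reach_rec x) \<partial>bern_list m ?p)"
    using e drift_factor_nonneg[of e] gamma_pot_ge_1[of e] by (intro nn_integral_cong) (simp add: ennreal_mult)
  also have "\<dots> \<le> ennreal (drift_factor e ^ k) * ennreal (1 + 3/5 * e)"
    using prefactor_bound by (simp add: nn_integral_cmult mult_left_mono)
  finally show ?thesis using e drift_factor_nonneg[of e] by (simp add: ennreal_mult)
qed

lemma drift_factor_power_le_exp:
  assumes "2 < real k * e^2"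
  shows "drift_factor e ^ k * (1 + 3/5 * e) \<le> exp (- (e^3 * real k / 2))"
proof -
  have "drift_factor e ^ k \<le> exp (- (4/5 * e^3)) ^ k"
    using e drift_factor_nonneg[of e] exp_ge_add_one_self[of "- (4/5 * e^3)"]
    by (intro power_mono) (auto simp: drift_factor_def)
  also have "\<dots> = exp (- (4/5 * e^3 * real k))" by (simp flip: exp_of_nat_mult)
  finally have A: "drift_factor e ^ k \<le> exp (- (4/5 * e^3 * real k))" .
  have "3/5 * e \<le> 3/10 * e * (real k * e^2)" using assms e by simp
  then have "1 + 3/5 * e \<le> 1 + 3/10 * e^3 * real k" by (simp add: power2_eq_square power3_eq_cube)
  also have "\<dots> \<le> exp (3/10 * e^3 * real k)" by (rule exp_ge_add_one_self)
  finally have B: "1 + 3/5 * e \<le> exp (3/10 * e^3 * real k)" .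
  have "drift_factor e ^ k * (1 + 3/5 * e) \<le> exp (- (4/5 * e^3 * real k)) * exp (3/10 * e^3 * real k)"
    using A B e drift_factor_nonneg[of e] by (intro mult_mono) auto
  also have "\<dots> = exp (- (e^3 * real k / 2))" by (simp flip: exp_add)
  finally show ?thesis .
qed

lemma prob_margin_rec_nonneg:
  "(\<integral>\<^sup>+x. \<integral>\<^sup>+y. of_bool (0 \<le> margin_rec x y) \<partial>bern_list k ((1 - e) / 2) \<partial>bern_list m ((1 - e) / 2))
   \<le> ennreal (exp (- (e^3 * real k / 2)))"
proof (cases "2 < real k * e^2")
  case True
  then show ?thesis
    using prob_margin_rec_nonneg_le_drift drift_factor_power_le_exp[OF True] ennreal_leI order_trans by blast
next
  case False
  show ?thesis
  proof (cases k)
    case 0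
    have "(\<integral>\<^sup>+x. \<integral>\<^sup>+y. of_bool (0 \<le> margin_rec x y) \<partial>bern_list k ((1 - e) / 2) \<partial>bern_list m ((1 - e) / 2))
        \<le> (\<integral>\<^sup>+x. \<integral>\<^sup>+y. 1 \<partial>bern_list k ((1 - e) / 2) \<partial>bern_list m ((1 - e) / 2))"
      by (intro nn_integral_mono) auto
    then show ?thesis using 0 by simp
  next
    case (Suc k')
    have "1 - e \<le> exp (- (e^3 * real k / 2))" using e False by (intro one_minus_le_exp_cube) auto
    then show ?thesis
      using prob_margin_rec_nonneg_le_one_minus[where e = e and k = k' and m = m] e Suc by (auto elim!: order_trans intro: ennreal_leI)
  qed
qed

lemma prob_margin_nonneg_le:
  shows "measure_pmf.prob (pair_pmf (bern_list m ((1 - e) / 2)) (bern_list k ((1 - e) / 2)))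
           {(x, y). margin x y \<ge> 0}
         \<le> exp (- (e^3 * real k / 2))"
proof -
  let ?M = "pair_pmf (bern_list m ((1 - e) / 2)) (bern_list k ((1 - e) / 2))"
  have "emeasure ?M {(x, y). margin x y \<ge> 0}
      = (\<integral>\<^sup>+x. \<integral>\<^sup>+y. indicator {(x, y). margin x y \<ge> 0} (x, y) \<partial>bern_list k ((1 - e) / 2) \<partial>bern_list m ((1 - e) / 2))"
    by (simp add: nn_integral_pair_pmf' flip: nn_integral_indicator)
  also have "\<dots> \<le> (\<integral>\<^sup>+x. \<integral>\<^sup>+y. of_bool (0 \<le> margin_rec x y) \<partial>bern_list k ((1 - e) / 2) \<partial>bern_list m ((1 - e) / 2))"
    by (intro nn_integral_mono) (auto simp: indicator_def intro: order_trans[OF _ margin_le_margin_rec])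
  also have "\<dots> \<le> ennreal (exp (- (e^3 * real k / 2)))"
    by (rule prob_margin_rec_nonneg)
  finally show ?thesis by (simp add: measure_pmf.emeasure_eq_measure)
qed

end

theorem mainTheorem14:
  "\<exists>C::real. \<forall>\<epsilon>::real. 0 < \<epsilon> \<and> \<epsilon> < 1 \<longrightarrow> (\<forall>m k::nat.
     measure_pmf.prob (pair_pmf (bern_list m ((1 - \<epsilon>) / 2)) (bern_list k ((1 - \<epsilon>) / 2)))
       {(x, y). margin x y \<ge> 0}
     \<le> exp (- (\<epsilon> ^ 3 * (1 - C * \<epsilon>) * real k / 2)))"
proof (intro exI[of _ 20] allI impI)
  fix e :: real and m k :: nat
  assume e: "0 < e \<and> e < 1"
  show "measure_pmf.prob (pair_pmf (bern_list m ((1 - e) / 2)) (bern_list k ((1 - e) / 2)))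
          {(x, y). margin x y \<ge> 0}
        \<le> exp (- (e ^ 3 * (1 - 20 * e) * real k / 2))"
  proof (cases "e \<le> 1/20")
    case True
    have "e ^ 3 * (1 - 20 * e) * real k \<le> e ^ 3 * 1 * real k"
      using e by (intro mult_right_mono mult_left_mono) auto
    then have "exp (- (e ^ 3 * real k / 2)) \<le> exp (- (e ^ 3 * (1 - 20 * e) * real k / 2))" by simp
    then show ?thesis using prob_margin_nonneg_le[of e m k] e True by linarith
  next
    case False
    then have "e ^ 3 * (1 - 20 * e) * real k \<le> 0"
      using e by (intro mult_nonpos_nonneg mult_nonneg_nonpos) auto
    then have "1 \<le> exp (- (e ^ 3 * (1 - 20 * e) * real k / 2))" by simp
    then show ?thesis by (meson measure_pmf.prob_le_1 order_trans)
  qed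
qed

end
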